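(* Fix a treatment group $d$, a post-treatment target age $a$, and a control group $d'$ with $d'>a\ge d$. Suppose the No Anticipation assumption holds for both genders $g\in\{f,m\}$ and both groups $d$ and $d'$, and suppose $$\frac{\gamma_{\mathrm{PT}}(f,d,d',a)}{APO(f,d,\infty,a)}=\frac{\gamma_{\mathrm{PT}}(m,d,d',a)}{APO(m,d,\infty,a)}.$$ Then $$\theta(f,d,a)-\theta(m,d,a)=\big[\delta_\theta(f,d,d',a)-\delta_\theta(m,d,d',a)\big]\,\frac{\delta_{\mathrm{APO}}(m,d,d',a)}{APO(m,d,\infty,a)},$$ so that the left-hand side is identified whenever $APO(m,d,\infty,a)$ is known.
   Context: Population of individuals with gender $G\in\{f,m\}$ and age at first childbirth $D$ (with $D=\infty$ meaning never). For each age $a$ and each (possibly counterfactual) first-birth age $d'\in\mathbb{N}\cup\{\infty\}$ there is a potential outcome (earnings) $Y_a(d')$; observed earnings satisfy consistency $Y_a=Y_a(D)$. Define $APO(g,d,d',a)=\mathbb{E}[Y_a(d')\mid G=g,D=d]$, $ATE(g,d,a)=APO(g,d,d,a)-APO(g,d,\infty,a)$, and $\theta(g,d,a)=ATE(g,d,a)/APO(g,d,\infty,a)$. Descriptive quantities: $\delta_{\mathrm{APO}}(g,d,d',a)=\mathbb{E}[Y_{d-1}\mid G=g,D=d]+\mathbb{E}[Y_a-Y_{d-1}\mid G=g,D=d']$, $\delta_{\mathrm{ATE}}(g,d,d',a)=\mathbb{E}[Y_a\mid G=g,D=d]-\delta_{\mathrm{APO}}(g,d,d',a)$, $\delta_\theta(g,d,d',a)=\delta_{\mathrm{ATE}}(g,d,d',a)/\delta_{\mathrm{APO}}(g,d,d',a)$.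 Parallel-trends violation: $\gamma_{\mathrm{PT}}(g,d,d',a)=APO(g,d,\infty,a)-APO(g,d,\infty,d-1)-[APO(g,d',\infty,a)-APO(g,d',\infty,d-1)]$. No Anticipation for gender $g$ and group $d$: $APO(g,d,d,b)=APO(g,d,\infty,b)$ for every age $b<d$. All denominators appearing are assumed nonzero. *)

theory Defs
  imports "HOL-Probability.Probability" "HOL-Library.Extended_Nat"
begin

datatype gender = Female | Male

text \<open>Population: probability space M; gender G; age at first birth D (\<infinity> = never);
  potential outcomes Yp a d' = Y_a(d'). Observed earnings via consistency: Y_a = Y_a(D).\<close>

definition obs :: "(nat \<Rightarrow> enat \<Rightarrow> 'a \<Rightarrow> real) \<Rightarrow> ('a \<Rightarrow> enat) \<Rightarrow> nat \<Rightarrow> 'a \<Rightarrow> real" where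
  "obs Yp D a \<omega> = Yp a (D \<omega>) \<omega>"

definition cexp :: "'a measure \<Rightarrow> ('a \<Rightarrow> gender) \<Rightarrow> ('a \<Rightarrow> enat) \<Rightarrow> ('a \<Rightarrow> real)
    \<Rightarrow> gender \<Rightarrow> enat \<Rightarrow> real" where
  "cexp M G D X g d =
     (let S = {\<omega> \<in> space M. G \<omega> = g \<and> D \<omega> = d} in (\<integral>\<omega>\<in>S. X \<omega> \<partial>M) / measure M S)"

definition APO :: "'a measure \<Rightarrow> ('a \<Rightarrow> gender) \<Rightarrow> ('a \<Rightarrow> enat) \<Rightarrow> (nat \<Rightarrow> enat \<Rightarrow> 'a \<Rightarrow> real)
    \<Rightarrow> gender \<Rightarrow> enat \<Rightarrow> enat \<Rightarrow> nat \<Rightarrow> real" where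
  "APO M G D Yp g d d' a = cexp M G D (Yp a d') g d"

definition ATE :: "'a measure \<Rightarrow> ('a \<Rightarrow> gender) \<Rightarrow> ('a \<Rightarrow> enat) \<Rightarrow> (nat \<Rightarrow> enat \<Rightarrow> 'a \<Rightarrow> real)
    \<Rightarrow> gender \<Rightarrow> enat \<Rightarrow> nat \<Rightarrow> real" where
  "ATE M G D Yp g d a = APO M G D Yp g d d a - APO M G D Yp g d \<infinity> a"

definition theta :: "'a measure \<Rightarrow> ('a \<Rightarrow> gender) \<Rightarrow> ('a \<Rightarrow> enat) \<Rightarrow> (nat \<Rightarrow> enat \<Rightarrow> 'a \<Rightarrow> real)
    \<Rightarrow> gender \<Rightarrow> enat \<Rightarrow> nat \<Rightarrow> real" where
  "theta M G D Yp g d a = ATE M G D Yp g d a / APO M G D Yp g d \<infinity> a"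

text \<open>Descriptive quantities; the treatment group d is a finite age (so that d-1 is an age).\<close>
definition delta_APO :: "'a measure \<Rightarrow> ('a \<Rightarrow> gender) \<Rightarrow> ('a \<Rightarrow> enat) \<Rightarrow> (nat \<Rightarrow> enat \<Rightarrow> 'a \<Rightarrow> real)
    \<Rightarrow> gender \<Rightarrow> nat \<Rightarrow> enat \<Rightarrow> nat \<Rightarrow> real" where
  "delta_APO M G D Yp g d d' a =
     cexp M G D (obs Yp D (d - 1)) g (enat d)
     + cexp M G D (\<lambda>\<omega>. obs Yp D a \<omega> - obs Yp D (d - 1) \<omega>) g d'"

definition delta_ATE :: "'a measure \<Rightarrow> ('a \<Rightarrow> gender) \<Rightarrow> ('a \<Rightarrow> enat) \<Rightarrow> (nat \<Rightarrow> enat \<Rightarrow> 'a \<Rightarrow> real)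
    \<Rightarrow> gender \<Rightarrow> nat \<Rightarrow> enat \<Rightarrow> nat \<Rightarrow> real" where
  "delta_ATE M G D Yp g d d' a =
     cexp M G D (obs Yp D a) g (enat d) - delta_APO M G D Yp g d d' a"

definition delta_theta :: "'a measure \<Rightarrow> ('a \<Rightarrow> gender) \<Rightarrow> ('a \<Rightarrow> enat) \<Rightarrow> (nat \<Rightarrow> enat \<Rightarrow> 'a \<Rightarrow> real)
    \<Rightarrow> gender \<Rightarrow> nat \<Rightarrow> enat \<Rightarrow> nat \<Rightarrow> real" where
  "delta_theta M G D Yp g d d' a =
     delta_ATE M G D Yp g d d' a / delta_APO M G D Yp g d d' a"

definition gamma_PT :: "'a measure \<Rightarrow> ('a \<Rightarrow> gender) \<Rightarrow> ('a \<Rightarrow> enat) \<Rightarrow> (nat \<Rightarrow> enat \<Rightarrow> 'a \<Rightarrow> real)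
    \<Rightarrow> gender \<Rightarrow> nat \<Rightarrow> enat \<Rightarrow> nat \<Rightarrow> real" where
  "gamma_PT M G D Yp g d d' a =
     APO M G D Yp g (enat d) \<infinity> a - APO M G D Yp g (enat d) \<infinity> (d - 1)
     - (APO M G D Yp g d' \<infinity> a - APO M G D Yp g d' \<infinity> (d - 1))"

definition no_anticipation :: "'a measure \<Rightarrow> ('a \<Rightarrow> gender) \<Rightarrow> ('a \<Rightarrow> enat) \<Rightarrow> (nat \<Rightarrow> enat \<Rightarrow> 'a \<Rightarrow> real)
    \<Rightarrow> gender \<Rightarrow> enat \<Rightarrow> bool" where
  "no_anticipation M G D Yp g d \<longleftrightarrow>
     (\<forall>b::nat. enat b < d \<longrightarrow> APO M G D Yp g d d b = APO M G D Yp g d \<infinity> b)"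

end

theory Submission
  imports Defs
begin

text \<open>Under No Anticipation in both groups, every mean entering \<open>delta_APO\<close> is an untreated
  potential mean, so \<open>delta_APO g = APO(g,d,\<infinity>,a) - gamma_PT g\<close>. The hypothesis on the relative
  parallel-trends violations therefore gives \<open>delta_APO g = (1 - r) * APO(g,d,\<infinity>,a)\<close> with one
  factor \<open>r\<close> for both genders. As \<open>theta\<close> and \<open>delta_theta\<close> are \<open>APO(g,d,d,a)\<close> over their
  respective baselines minus one, the gender gap in \<open>theta\<close> is the gap in \<open>delta_theta\<close>
  rescaled by \<open>1 - r\<close>.\<close>

lemma group_event_in_sets:
  assumes "G \<in> measurable M (count_space UNIV)" and "D \<in> measurable M (count_space UNIV)"
  shows "{\<omega> \<in> space M. G \<omega> = g \<and> D \<omega> = e} \<in> sets M"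
proof -
  have "{\<omega> \<in> space M. G \<omega> = g \<and> D \<omega> = e} = (G -` {g} \<inter> space M) \<inter> (D -` {e} \<inter> space M)"
    by auto
  then show ?thesis
    using measurable_sets[OF assms(1), of "{g}"] measurable_sets[OF assms(2), of "{e}"] by auto
qed

lemma cexp_cong:
  assumes "\<And>\<omega>. \<omega> \<in> space M \<Longrightarrow> G \<omega> = g \<Longrightarrow> D \<omega> = e \<Longrightarrow> X \<omega> = Y \<omega>"
  shows "cexp M G D X g e = cexp M G D Y g e"
  unfolding cexp_def Let_def set_lebesgue_integral_def
  by (rule arg_cong[where f = "\<lambda>x. x / _"], rule Bochner_Integration.integral_cong)
     (auto simp: assms indicator_def)

lemma cexp_diff:
  assumes "G \<in> measurable M (count_space UNIV)" and "D \<in> measurable M (count_space UNIV)"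
    and "integrable M X" and "integrable M Y"
  shows "cexp M G D (\<lambda>\<omega>. X \<omega> - Y \<omega>) g e = cexp M G D X g e - cexp M G D Y g e"
proof -
  let ?S = "{\<omega> \<in> space M. G \<omega> = g \<and> D \<omega> = e}"
  have S: "?S \<in> sets M"
    using group_event_in_sets[OF assms(1,2)] .
  have "set_integrable M ?S X" and "set_integrable M ?S Y"
    unfolding set_integrable_def
    by (rule integrable_mult_indicator[OF S assms(3)], rule integrable_mult_indicator[OF S assms(4)])
  then have "(\<integral>\<omega>\<in>?S. X \<omega> - Y \<omega> \<partial>M) = (\<integral>\<omega>\<in>?S. X \<omega> \<partial>M) - (\<integral>\<omega>\<in>?S. Y \<omega> \<partial>M)"
    by (rule set_integral_diff(2))
  then show ?thesis
    unfolding cexp_def Let_def by (simp only: diff_divide_distrib)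
qed

lemma cexp_obs: "cexp M G D (obs Yp D b) g e = cexp M G D (Yp b e) g e"
  by (rule cexp_cong) (simp add: obs_def)

lemma cexp_obs_diff:
  assumes "G \<in> measurable M (count_space UNIV)" and "D \<in> measurable M (count_space UNIV)"
    and "integrable M (Yp a e)" and "integrable M (Yp c e)"
  shows "cexp M G D (\<lambda>\<omega>. obs Yp D a \<omega> - obs Yp D c \<omega>) g e
       = APO M G D Yp g e e a - APO M G D Yp g e e c"
proof -
  have "cexp M G D (\<lambda>\<omega>. obs Yp D a \<omega> - obs Yp D c \<omega>) g e
      = cexp M G D (\<lambda>\<omega>. Yp a e \<omega> - Yp c e \<omega>) g e"
    by (rule cexp_cong) (simp add: obs_def)
  then show ?thesis
    unfolding APO_def using cexp_diff[OF assms] by simp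
qed

lemma theta_eq_APO_ratio:
  assumes "APO M G D Yp g d \<infinity> a \<noteq> 0"
  shows "theta M G D Yp g d a = APO M G D Yp g d d a / APO M G D Yp g d \<infinity> a - 1"
  using assms unfolding theta_def ATE_def by (simp add: diff_divide_distrib)

lemma delta_theta_eq_APO_ratio:
  assumes "delta_APO M G D Yp g d d' a \<noteq> 0"
  shows "delta_theta M G D Yp g d d' a
       = APO M G D Yp g (enat d) (enat d) a / delta_APO M G D Yp g d d' a - 1"
  using assms unfolding delta_theta_def delta_ATE_def cexp_obs APO_def
  by (simp add: diff_divide_distrib)

lemma delta_APO_eq_APO_minus_gamma_PT:
  assumes "G \<in> measurable M (count_space UNIV)" and "D \<in> measurable M (count_space UNIV)"
    and "\<And>b e. integrable M (Yp b e)"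
    and "1 \<le> d" and "d \<le> a" and "enat a < d'"
    and "no_anticipation M G D Yp g (enat d)" and "no_anticipation M G D Yp g d'"
  shows "delta_APO M G D Yp g d d' a = APO M G D Yp g (enat d) \<infinity> a - gamma_PT M G D Yp g d d' a"
proof -
  have "enat (d - 1) < d'"
    using assms(5,6) by (metis diff_le_self enat_ord_simps(1) le_less_trans order.trans)
  then have "APO M G D Yp g d' d' (d - 1) = APO M G D Yp g d' \<infinity> (d - 1)"
    and "APO M G D Yp g d' d' a = APO M G D Yp g d' \<infinity> a"
    using assms(6,8) unfolding no_anticipation_def by blast+
  moreover have "APO M G D Yp g (enat d) (enat d) (d - 1) = APO M G D Yp g (enat d) \<infinity> (d - 1)"
    using assms(4,7) unfolding no_anticipation_def by simp
  ultimately show ?thesis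
    unfolding delta_APO_def gamma_PT_def cexp_obs cexp_obs_diff[OF assms(1,2) assms(3) assms(3)]
    by (simp add: APO_def)
qed

lemma ratio_gap_rescale:
  fixes Pf Pm Qf Qm Tf Tm :: real
  assumes "Pf \<noteq> 0" and "Pm \<noteq> 0" and "Qm \<noteq> 0" and "Qf / Pf = Qm / Pm"
  shows "(Tf / Pf - 1) - (Tm / Pm - 1) = ((Tf / Qf - 1) - (Tm / Qm - 1)) * (Qm / Pm)"
proof -
  define c where "c = Qm / Pm"
  have "c \<noteq> 0"
    using assms(2,3) by (simp add: c_def)
  have Qf: "Qf = c * Pf" and Qm: "Qm = c * Pm"
    using assms(1,2,4) by (simp_all add: c_def divide_eq_eq)
  show ?thesis
    unfolding c_def[symmetric] Qf Qm using \<open>c \<noteq> 0\<close> assms(1,2) by (simp add: field_simps)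
qed

theorem proposition2:
  fixes M :: "'a measure" and G :: "'a \<Rightarrow> gender" and D :: "'a \<Rightarrow> enat"
    and Yp :: "nat \<Rightarrow> enat \<Rightarrow> 'a \<Rightarrow> real"
    and d :: nat and d' :: enat and a :: nat
  assumes "prob_space M"
    and "G \<in> measurable M (count_space UNIV)"
    and "D \<in> measurable M (count_space UNIV)"
    and "\<And>b e. integrable M (Yp b e)"
    and "1 \<le> d" and "d \<le> a" and "enat a < d'"
    and "\<And>g. no_anticipation M G D Yp g (enat d)"
    and "\<And>g. no_anticipation M G D Yp g d'"
    and "\<And>g. APO M G D Yp g (enat d) \<infinity> a \<noteq> 0"
    and "\<And>g. delta_APO M G D Yp g d d' a \<noteq> 0"
    and "gamma_PT M G D Yp Female d d' a / APO M G D Yp Female (enat d) \<infinity> a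
       = gamma_PT M G D Yp Male d d' a / APO M G D Yp Male (enat d) \<infinity> a"
  shows "theta M G D Yp Female (enat d) a - theta M G D Yp Male (enat d) a
       = (delta_theta M G D Yp Female d d' a - delta_theta M G D Yp Male d d' a)
         * (delta_APO M G D Yp Male d d' a / APO M G D Yp Male (enat d) \<infinity> a)"
proof -
  have delta_APO_ratio: "delta_APO M G D Yp g d d' a / APO M G D Yp g (enat d) \<infinity> a
      = 1 - gamma_PT M G D Yp g d d' a / APO M G D Yp g (enat d) \<infinity> a" for g
    using delta_APO_eq_APO_minus_gamma_PT[OF assms(2-7,8,9)] assms(10)
    by (simp add: diff_divide_distrib)
  have "delta_APO M G D Yp Female d d' a / APO M G D Yp Female (enat d) \<infinity> a
      = delta_APO M G D Yp Male d d' a / APO M G D Yp Male (enat d) \<infinity> a"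
    unfolding delta_APO_ratio assms(12) ..
  then show ?thesis
    unfolding theta_eq_APO_ratio[OF assms(10)] delta_theta_eq_APO_ratio[OF assms(11)]
    by (rule ratio_gap_rescale[OF assms(10,10,11)])
qed

end
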